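(* The generating function $$G_{(231,312)}(x,p,q,y,z)=\sum_{n\ge 0}\ \sum_{\pi\in S_n(231,312)} x^n p^{\operatorname{asc}(\pi)} q^{\operatorname{des}(\pi)} y^{\operatorname{MNA}(\pi)} z^{\operatorname{MND}(\pi)}$$ is equal to $$\frac{1 + x + p x^2 y - p^2 x^2 y + q x^2 z - q^2 x^2 z - p q x^2 y z + p q x^3 y z - p^2 q x^3 y z - p q^2 x^3 y z}{1 - p^2 x^2 y - q^2 x^2 z - p q x^2 y z - p^2 q x^3 y z - p q^2 x^3 y z}.$$
   Context: For $n\ge 0$, $S_n$ denotes the set of permutations $\pi=\pi_1\pi_2\cdots\pi_n$ of $[n]=\{1,\dots,n\}$ ($S_0$ consists of the empty permutation, for which all statistics below are $0$). A permutation $\pi\in S_n$ avoids a pattern $\tau\in S_k$ if there are no indices $i_1<\dots<i_k$ such that $\pi_{i_a}<\pi_{i_b}$ if and only if $\tau_a<\tau_b$; $S_n(\tau,\rho)$ is the set of permutations in $S_n$ avoiding both $\tau$ and $\rho$. $\operatorname{asc}(\pi)$ (resp. $\operatorname{des}(\pi)$) is the number of $i\in[n-1]$ with $\pi_i<\pi_{i+1}$ (resp. $\pi_i>\pi_{i+1}$). $\operatorname{MNA}(\pi)$ is the maximum size of a set $I\subseteq[n-1]$ such that $\pi_i<\pi_{i+1}$ for all $i\in I$ and $|i-j|\ge 2$ for distinct $i,j\in I$; $\operatorname{MND}(\pi)$ is defined analogously with $\pi_i>\pi_{i+1}$. *)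

theory Defs
  imports "HOL-Computational_Algebra.Formal_Power_Series"
begin

text \<open>Permutations of [n] as lists (one-line notation), 0-indexed positions.\<close>
definition perms :: "nat \<Rightarrow> nat list set" where
  "perms n = {xs. distinct xs \<and> set xs = {1..n}}"

definition contains_pat :: "nat list \<Rightarrow> nat list \<Rightarrow> bool" where
  "contains_pat \<pi> \<tau> \<longleftrightarrow>
     (\<exists>\<iota>::nat \<Rightarrow> nat. strict_mono_on {..<length \<tau>} \<iota> \<and>
        (\<forall>a<length \<tau>. \<iota> a < length \<pi>) \<and>
        (\<forall>a<length \<tau>. \<forall>b<length \<tau>. (\<pi> ! (\<iota> a) < \<pi> ! (\<iota> b)) \<longleftrightarrow> (\<tau> ! a < \<tau> ! b)))"

definition avoids :: "nat list \<Rightarrow> nat list \<Rightarrow> bool" where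
  "avoids \<pi> \<tau> \<longleftrightarrow> \<not> contains_pat \<pi> \<tau>"

definition av2 :: "nat \<Rightarrow> nat list \<Rightarrow> nat list \<Rightarrow> nat list set" where
  "av2 n \<tau> \<rho> = {\<pi> \<in> perms n. avoids \<pi> \<tau> \<and> avoids \<pi> \<rho>}"

definition ascset :: "nat list \<Rightarrow> nat set" where
  "ascset \<pi> = {i. Suc i < length \<pi> \<and> \<pi> ! i < \<pi> ! Suc i}"

definition desset :: "nat list \<Rightarrow> nat set" where
  "desset \<pi> = {i. Suc i < length \<pi> \<and> \<pi> ! i > \<pi> ! Suc i}"

definition asc :: "nat list \<Rightarrow> nat" where "asc \<pi> = card (ascset \<pi>)"
definition des :: "nat list \<Rightarrow> nat" where "des \<pi> = card (desset \<pi>)"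

definition nonadj :: "nat set \<Rightarrow> bool" where
  "nonadj I \<longleftrightarrow> (\<forall>i\<in>I. \<forall>j\<in>I. i \<noteq> j \<longrightarrow> 2 \<le> (if i \<le> j then j - i else i - j))"

definition MNA :: "nat list \<Rightarrow> nat" where
  "MNA \<pi> = Max (card ` {I. I \<subseteq> ascset \<pi> \<and> nonadj I})"

definition MND :: "nat list \<Rightarrow> nat" where
  "MND \<pi> = Max (card ` {I. I \<subseteq> desset \<pi> \<and> nonadj I})"

definition G231_312 :: "'a::comm_ring_1 \<Rightarrow> 'a \<Rightarrow> 'a \<Rightarrow> 'a \<Rightarrow> 'a fps" where
  "G231_312 p q y z = Abs_fps (\<lambda>n. \<Sum>\<pi>\<in>av2 n [2,3,1] [3,1,2].
      p ^ asc \<pi> * q ^ des \<pi> * y ^ MNA \<pi> * z ^ MND \<pi>)"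

end

theory Submission
  imports Defs
begin

(* A permutation avoiding 231 and 312 ends either with its maximum or with the value one below
   the entry before it; deleting the last entry and standardising leaves a shorter such
   permutation.  Hence these permutations of [n] correspond bijectively to their up-down words of
   length n - 1, and asc, des, MNA and MND depend only on the word.  Splitting the words by their
   first two letters shows that the total weight t(m) of the words of length m satisfies
     t(m+3) = (p^2 y + q^2 z + p q y z) t(m+1) + (p^2 q + p q^2) y z t(m),
   and this recurrence, together with t(0), t(1), t(2), amounts to the stated rational function. *)

section \<open>Permutations and the patterns 231 and 312\<close>

lemma perms_length: "\<pi> \<in> perms n \<Longrightarrow> length \<pi> = n"
  unfolding perms_def using distinct_card by fastforce

lemma perms_snoc_max_iff: "\<pi> @ [Suc n] \<in> perms (Suc n) \<longleftrightarrow> \<pi> \<in> perms n"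
  unfolding perms_def by (auto simp: atLeastAtMostSuc_conv insert_ident)

lemma nth_perms: "\<pi> \<in> perms n \<Longrightarrow> i < n \<Longrightarrow> \<pi> ! i \<in> {1..n}"
  using perms_length[of \<pi> n] nth_mem[of i \<pi>] by (auto simp: perms_def)

lemma last_perms:
  assumes "\<pi> \<in> perms n" "n \<ge> 1" shows "last \<pi> \<in> {1..n}"
proof -
  have len: "length \<pi> = n" using assms(1) by (rule perms_length)
  then have "\<pi> \<noteq> []" using assms(2) by auto
  then show ?thesis
    using nth_perms[OF assms(1), of "n - 1"] assms(2) by (simp add: last_conv_nth len)
qed

lemma perms_one: "perms 1 = {[1]}"
proof -
  have "\<pi> = [1]" if \<pi>: "\<pi> \<in> perms 1" for \<pi>
  proof -
    obtain a where "\<pi> = [a]"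
      using perms_length[OF \<pi>] by (metis length_0_conv length_Suc_conv One_nat_def)
    then show ?thesis using \<pi> by (simp add: perms_def)
  qed
  then show ?thesis by (auto simp: perms_def)
qed

lemma all_less_3_iff: "(\<forall>a<(3::nat). P a) \<longleftrightarrow> P 0 \<and> P 1 \<and> P 2"
  by (auto simp: numeral_eq_Suc less_Suc_eq)

lemma contains_pat_length3:
  assumes "length \<tau> = 3"
  shows "contains_pat \<pi> \<tau> \<longleftrightarrow> (\<exists>i j k. i < j \<and> j < k \<and> k < length \<pi> \<and>
    (\<forall>a<3. \<forall>b<3. \<pi> ! ([i,j,k] ! a) < \<pi> ! ([i,j,k] ! b) \<longleftrightarrow> \<tau> ! a < \<tau> ! b))"
proof
  assume "contains_pat \<pi> \<tau>"
  then obtain \<iota> where mono: "strict_mono_on {..<length \<tau>} \<iota>"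
    and bound: "\<forall>a<length \<tau>. \<iota> a < length \<pi>"
    and order: "\<forall>a<length \<tau>. \<forall>b<length \<tau>. \<pi> ! \<iota> a < \<pi> ! \<iota> b \<longleftrightarrow> \<tau> ! a < \<tau> ! b"
    unfolding contains_pat_def by blast
  have "\<iota> 0 < \<iota> 1" "\<iota> 1 < \<iota> 2" using mono assms by (auto simp: strict_mono_on_def)
  moreover have "\<iota> 2 < length \<pi>" using bound assms by auto
  moreover have "\<forall>a<3. [\<iota> 0, \<iota> 1, \<iota> 2] ! a = \<iota> a" by (simp add: all_less_3_iff)
  ultimately show "\<exists>i j k. i < j \<and> j < k \<and> k < length \<pi> \<and>
      (\<forall>a<3. \<forall>b<3. \<pi> ! ([i,j,k] ! a) < \<pi> ! ([i,j,k] ! b) \<longleftrightarrow> \<tau> ! a < \<tau> ! b)"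
    using order assms by (intro exI[of _ "\<iota> 0"] exI[of _ "\<iota> 1"] exI[of _ "\<iota> 2"]) auto
next
  assume "\<exists>i j k. i < j \<and> j < k \<and> k < length \<pi> \<and>
      (\<forall>a<3. \<forall>b<3. \<pi> ! ([i,j,k] ! a) < \<pi> ! ([i,j,k] ! b) \<longleftrightarrow> \<tau> ! a < \<tau> ! b)"
  then obtain i j k where ijk: "i < j" "j < k" "k < length \<pi>"
    and order: "\<forall>a<3. \<forall>b<3. \<pi> ! ([i,j,k] ! a) < \<pi> ! ([i,j,k] ! b) \<longleftrightarrow> \<tau> ! a < \<tau> ! b"
    by blast
  have "strict_mono_on {..<length \<tau>} (\<lambda>a. [i,j,k] ! a)"
    using ijk assms by (auto simp: strict_mono_on_def numeral_eq_Suc less_Suc_eq)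
  then show "contains_pat \<pi> \<tau>" unfolding contains_pat_def
    using ijk order assms
    by (intro exI[of _ "\<lambda>a. [i,j,k] ! a"]) (auto simp: numeral_eq_Suc less_Suc_eq)
qed

lemma contains_231_iff:
  "contains_pat \<pi> [2,3,1] \<longleftrightarrow>
    (\<exists>i j k. i < j \<and> j < k \<and> k < length \<pi> \<and> \<pi> ! k < \<pi> ! i \<and> \<pi> ! i < \<pi> ! j)"
proof -
  have "(\<forall>a<3. \<forall>b<3. \<pi> ! ([i,j,k] ! a) < \<pi> ! ([i,j,k] ! b) \<longleftrightarrow> [2,3,1::nat] ! a < [2,3,1] ! b)
      \<longleftrightarrow> \<pi> ! k < \<pi> ! i \<and> \<pi> ! i < \<pi> ! j" for i j k
    by (auto simp: all_less_3_iff)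
  then show ?thesis by (simp add: contains_pat_length3)
qed

lemma contains_312_iff:
  "contains_pat \<pi> [3,1,2] \<longleftrightarrow>
    (\<exists>i j k. i < j \<and> j < k \<and> k < length \<pi> \<and> \<pi> ! j < \<pi> ! k \<and> \<pi> ! k < \<pi> ! i)"
proof -
  have "(\<forall>a<3. \<forall>b<3. \<pi> ! ([i,j,k] ! a) < \<pi> ! ([i,j,k] ! b) \<longleftrightarrow> [3,1,2::nat] ! a < [3,1,2] ! b)
      \<longleftrightarrow> \<pi> ! j < \<pi> ! k \<and> \<pi> ! k < \<pi> ! i" for i j k
    by (auto simp: all_less_3_iff)
  then show ?thesis by (simp add: contains_pat_length3)
qed

definition avoids_231_312 :: "nat list \<Rightarrow> bool" where
  "avoids_231_312 \<pi> \<longleftrightarrow> (\<forall>i j k. i < j \<longrightarrow> j < k \<longrightarrow> k < length \<pi> \<longrightarrow>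
     \<not> (\<pi> ! k < \<pi> ! i \<and> \<pi> ! i < \<pi> ! j) \<and> \<not> (\<pi> ! j < \<pi> ! k \<and> \<pi> ! k < \<pi> ! i))"

lemma av2_231_312_eq: "av2 n [2,3,1] [3,1,2] = {\<pi> \<in> perms n. avoids_231_312 \<pi>}"
  unfolding av2_def avoids_def contains_231_iff contains_312_iff avoids_231_312_def by blast

lemma avoids_231_312_take: "avoids_231_312 \<pi> \<Longrightarrow> avoids_231_312 (take m \<pi>)"
  unfolding avoids_231_312_def by auto

lemma avoids_231_312_map_strict_mono:
  "strict_mono f \<Longrightarrow> avoids_231_312 (map f \<pi>) \<longleftrightarrow> avoids_231_312 \<pi>"
  unfolding avoids_231_312_def by (auto simp: strict_mono_less)

section \<open>Up-down words\<close>

definition updown :: "nat list \<Rightarrow> bool list" where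
  "updown \<pi> = map (\<lambda>i. \<pi> ! i < \<pi> ! Suc i) [0..<length \<pi> - 1]"

lemma length_updown [simp]: "length (updown \<pi>) = length \<pi> - 1"
  by (simp add: updown_def)

lemma updown_snoc: "\<pi> \<noteq> [] \<Longrightarrow> updown (\<pi> @ [v]) = updown \<pi> @ [last \<pi> < v]"
  by (induction \<pi> rule: rev_induct)
    (auto simp: updown_def nth_append last_conv_nth intro!: map_cong)

lemma updown_map_strict_mono: "strict_mono f \<Longrightarrow> updown (map f \<pi>) = updown \<pi>"
  by (simp add: updown_def strict_mono_less)

definition lift_from :: "nat \<Rightarrow> nat \<Rightarrow> nat" where
  "lift_from k v = (if k \<le> v then Suc v else v)"

definition lower_above :: "nat \<Rightarrow> nat \<Rightarrow> nat" where
  "lower_above k v = (if k < v then v - 1 else v)"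

lemma strict_mono_lift_from: "strict_mono (lift_from k)"
  by (rule strict_monoI) (simp add: lift_from_def)

lemma lift_from_lower_above: "v \<noteq> k \<Longrightarrow> lift_from k (lower_above k v) = v"
  by (auto simp: lift_from_def lower_above_def)

lemma lift_from_image:
  assumes "k \<in> {1..Suc n}" shows "lift_from k ` {1..n} = {1..Suc n} - {k}"
proof (intro equalityI subsetI)
  fix v assume v: "v \<in> {1..Suc n} - {k}"
  then have "lower_above k v \<in> {1..n}" using assms by (auto simp: lower_above_def)
  with v show "v \<in> lift_from k ` {1..n}"
    by (metis Diff_iff insertI1 lift_from_lower_above rev_image_eqI)
qed (use assms in \<open>auto simp: lift_from_def\<close>)

lemma perms_lift_from_snoc_iff:
  assumes "k \<in> {1..Suc n}"
  shows "map (lift_from k) \<pi> @ [k] \<in> perms (Suc n) \<longleftrightarrow> \<pi> \<in> perms n"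
proof -
  have inj: "inj (lift_from k)" using strict_mono_lift_from by (rule strict_mono_imp_inj_on)
  have k_notin: "k \<notin> lift_from k ` A" for A by (auto simp: lift_from_def)
  have "insert k (lift_from k ` set \<pi>) = {1..Suc n} \<longleftrightarrow> lift_from k ` set \<pi> = {1..Suc n} - {k}"
    using k_notin[of "set \<pi>"] assms by blast
  also have "\<dots> \<longleftrightarrow> lift_from k ` set \<pi> = lift_from k ` {1..n}"
    using assms by (simp only: lift_from_image)
  also have "\<dots> \<longleftrightarrow> set \<pi> = {1..n}" using inj by (rule inj_image_eq_iff)
  finally show ?thesis
    unfolding perms_def using k_notin inj by (auto simp: distinct_map inj_on_subset[OF inj])
qed

lemma avoids_231_312_snoc:
  "avoids_231_312 (\<pi> @ [v]) \<longleftrightarrow> avoids_231_312 \<pi> \<and>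
    (\<forall>i j. i < j \<longrightarrow> j < length \<pi> \<longrightarrow>
      \<not> (v < \<pi> ! i \<and> \<pi> ! i < \<pi> ! j) \<and> \<not> (\<pi> ! j < v \<and> v < \<pi> ! i))"
  unfolding avoids_231_312_def by (auto simp: nth_append less_Suc_eq)

definition extend_perm :: "bool \<Rightarrow> nat list \<Rightarrow> nat list" where
  "extend_perm b \<pi> =
     (if b then \<pi> @ [Suc (length \<pi>)] else map (lift_from (last \<pi>)) \<pi> @ [last \<pi>])"

lemma extend_perm_perms: "\<pi> \<in> perms n \<Longrightarrow> n \<ge> 1 \<Longrightarrow> extend_perm b \<pi> \<in> perms (Suc n)"
  using last_perms[of \<pi> n]
  by (auto simp: extend_perm_def perms_length perms_snoc_max_iff perms_lift_from_snoc_iff)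

lemma updown_extend_perm:
  assumes "\<pi> \<in> perms n" "n \<ge> 1"
  shows "updown (extend_perm b \<pi>) = updown \<pi> @ [b]"
proof -
  have "\<pi> \<noteq> []" using assms perms_length by fastforce
  then show ?thesis using last_perms[OF assms]
    by (auto simp: extend_perm_def updown_snoc updown_map_strict_mono strict_mono_lift_from
        last_map perms_length[OF assms(1)] lift_from_def)
qed

lemma avoids_231_312_extend_perm:
  assumes "\<pi> \<in> perms n" "n \<ge> 1" "avoids_231_312 \<pi>"
  shows "avoids_231_312 (extend_perm b \<pi>)"
proof (cases b)
  case True
  have "\<not> Suc n < \<pi> ! i" if "i < n" for i using nth_perms[OF assms(1) that] by simp
  then show ?thesis using True assms(3) perms_length[OF assms(1)]
    by (auto simp: extend_perm_def avoids_231_312_snoc)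
next
  case False
  obtain \<rho> k where \<pi>: "\<pi> = \<rho> @ [k]"
    using assms perms_length by (metis append_butlast_last_id list.size(3) not_one_le_zero)
  have k_notin: "k \<notin> set \<rho>" using assms(1) \<pi> by (simp add: perms_def)
  have "avoids_231_312 \<rho>" and last_ok: "\<forall>i j. i < j \<longrightarrow> j < length \<rho> \<longrightarrow>
      \<not> (k < \<rho> ! i \<and> \<rho> ! i < \<rho> ! j) \<and> \<not> (\<rho> ! j < k \<and> k < \<rho> ! i)"
    using assms(3) \<pi> by (simp_all add: avoids_231_312_snoc)
  \<comment> \<open>The new last entry \<open>k\<close> sits just below the lifted old one, so it forms the same
      patterns with the earlier entries as the old last entry did in \<open>\<pi>\<close>.\<close>
  define \<sigma> where "\<sigma> = map (lift_from k) \<rho> @ [Suc k]"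
  have "extend_perm b \<pi> = \<sigma> @ [k]"
    using False \<pi> by (simp add: \<sigma>_def extend_perm_def lift_from_def)
  moreover have "avoids_231_312 \<sigma>"
    using assms(3) \<pi> avoids_231_312_map_strict_mono[OF strict_mono_lift_from, of k \<pi>]
    by (simp add: \<sigma>_def lift_from_def)
  moreover have "\<not> (k < \<sigma> ! i \<and> \<sigma> ! i < \<sigma> ! j) \<and> \<not> (\<sigma> ! j < k \<and> k < \<sigma> ! i)"
    if "i < j" "j < length \<sigma>" for i j
  proof (cases "j = length \<rho>")
    case True
    then show ?thesis using that by (auto simp: \<sigma>_def nth_append lift_from_def)
  next
    case False
    then have "j < length \<rho>" using that by (simp add: \<sigma>_def)
    moreover have "\<rho> ! i \<noteq> k" "\<rho> ! j \<noteq> k"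
      using k_notin nth_mem \<open>j < length \<rho>\<close> less_trans[OF that(1) \<open>j < length \<rho>\<close>] by metis+
    ultimately show ?thesis
      using that(1) last_ok[rule_format, OF that(1)] by (auto simp: \<sigma>_def nth_append lift_from_def)
  qed
  ultimately show ?thesis by (simp add: avoids_231_312_snoc)
qed

lemma avoids_231_312_last_ascent:
  assumes "\<sigma> \<in> perms (Suc n)" "avoids_231_312 \<sigma>" "n \<ge> 1" "\<sigma> ! (n - 1) < \<sigma> ! n"
  shows "\<sigma> ! n = Suc n"
proof -
  have below: "\<sigma> ! i \<le> \<sigma> ! n" if "i < n - 1" for i
    using assms(2)[unfolded avoids_231_312_def, rule_format, of i "n - 1" n] assms(3,4) that
      perms_length[OF assms(1)]
    by auto
  have "Suc n \<in> set \<sigma>" using assms(1) by (simp add: perms_def)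
  then obtain m where "m < Suc n" "\<sigma> ! m = Suc n"
    using perms_length[OF assms(1)] by (metis in_set_conv_nth)
  moreover have "m < n - 1 \<or> m = n - 1 \<or> m = n" using \<open>m < Suc n\<close> by arith
  ultimately show ?thesis
    using below[of m] assms(4) nth_perms[OF assms(1), of n] by auto
qed

lemma avoids_231_312_last_descent:
  assumes "\<sigma> \<in> perms (Suc n)" "avoids_231_312 \<sigma>" "n \<ge> 1" "\<sigma> ! n < \<sigma> ! (n - 1)"
  shows "\<sigma> ! (n - 1) = Suc (\<sigma> ! n)"
proof (rule ccontr)
  assume "\<sigma> ! (n - 1) \<noteq> Suc (\<sigma> ! n)"
  then have gap: "Suc (\<sigma> ! n) < \<sigma> ! (n - 1)" using assms(4) by simp
  have "\<sigma> ! (n - 1) \<le> Suc n" using nth_perms[OF assms(1), of "n - 1"] by simp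
  then have "Suc (\<sigma> ! n) \<in> set \<sigma>" using assms(1) gap by (simp add: perms_def)
  then obtain m where m: "m < Suc n" "\<sigma> ! m = Suc (\<sigma> ! n)"
    using perms_length[OF assms(1)] by (metis in_set_conv_nth)
  then have "m \<noteq> n" "m \<noteq> n - 1" using gap by auto
  then have "m < n - 1" using m(1) by arith
  then show False
    using assms(2)[unfolded avoids_231_312_def, rule_format, of m "n - 1" n] assms(3) m(2) gap
      perms_length[OF assms(1)]
    by auto
qed

lemma avoids_231_312_perms_Suc_cases:
  assumes "\<sigma> \<in> perms (Suc n)" "avoids_231_312 \<sigma>" "n \<ge> 1"
  obtains b \<pi> where "\<pi> \<in> perms n" "avoids_231_312 \<pi>" "\<sigma> = extend_perm b \<pi>"
proof -
  define \<rho> where "\<rho> = take n \<sigma>"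
  define k where "k = \<sigma> ! n"
  have len: "length \<sigma> = Suc n" using assms(1) by (rule perms_length)
  have \<sigma>: "\<sigma> = \<rho> @ [k]"
    using len by (simp add: \<rho>_def k_def take_Suc_conv_app_nth[symmetric])
  have len_\<rho>: "length \<rho> = n" using len by (simp add: \<rho>_def)
  have av_\<rho>: "avoids_231_312 \<rho>" using assms(2) by (simp add: \<rho>_def avoids_231_312_take)
  have "\<rho> \<noteq> []" using assms(3) len_\<rho> by auto
  then have last_\<rho>: "last \<rho> = \<sigma> ! (n - 1)"
    using assms(3) len_\<rho> by (simp add: last_conv_nth \<rho>_def)
  have k_notin: "k \<notin> set \<rho>" using assms(1) \<sigma> by (simp add: perms_def)
  have "\<sigma> ! (n - 1) \<noteq> k" using k_notin last_\<rho> last_in_set[OF \<open>\<rho> \<noteq> []\<close>] by auto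
  then consider "\<sigma> ! (n - 1) < k" | "k < \<sigma> ! (n - 1)" by linarith
  then show thesis
  proof cases
    case 1
    then have "k = Suc n" using avoids_231_312_last_ascent[OF assms] by (simp add: k_def)
    then have "\<sigma> = \<rho> @ [Suc n]" using \<sigma> by simp
    then show thesis
      using that[of \<rho> True] assms(1) av_\<rho> len_\<rho> by (simp add: extend_perm_def perms_snoc_max_iff)
  next
    case 2
    define \<pi> where "\<pi> = map (lower_above k) \<rho>"
    have \<rho>_eq: "map (lift_from k) \<pi> = \<rho>"
      unfolding \<pi>_def map_map by (rule map_idI) (metis comp_apply k_notin lift_from_lower_above)
    have "last \<rho> = Suc k" using 2 avoids_231_312_last_descent[OF assms] last_\<rho> by (simp add: k_def)
    then have "last \<pi> = k" using \<open>\<rho> \<noteq> []\<close> by (simp add: \<pi>_def last_map lower_above_def)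
    then have "\<sigma> = extend_perm False \<pi>" using \<sigma> \<rho>_eq by (simp add: extend_perm_def)
    moreover have "k \<in> {1..Suc n}" using nth_perms[OF assms(1), of n] by (simp add: k_def)
    then have "\<pi> \<in> perms n" using assms(1) \<sigma> \<rho>_eq by (metis perms_lift_from_snoc_iff)
    moreover have "avoids_231_312 \<pi>"
      using av_\<rho> \<rho>_eq avoids_231_312_map_strict_mono[OF strict_mono_lift_from] by metis
    ultimately show thesis using that by blast
  qed
qed

lemma bij_betw_updown:
  assumes "n \<ge> 1"
  shows "bij_betw updown {\<pi> \<in> perms n. avoids_231_312 \<pi>} {w. length w = n - 1}"
  using assms
proof (induction n rule: nat_induct_at_least)
  case base
  have "{\<pi> \<in> perms 1. avoids_231_312 \<pi>} = {[1]}"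
    unfolding perms_one by (auto simp: avoids_231_312_def)
  then show ?case by (simp add: updown_def bij_betw_def)
next
  case (Suc n)
  let ?A = "{\<pi> \<in> perms n. avoids_231_312 \<pi>}"
  let ?B = "{\<sigma> \<in> perms (Suc n). avoids_231_312 \<sigma>}"
  have inj_A: "inj_on updown ?A" and image_A: "updown ` ?A = {w. length w = n - 1}"
    using Suc.IH by (auto simp: bij_betw_def)
  have extension_mem: "extend_perm b \<pi> \<in> ?B"
    and updown_extension: "updown (extend_perm b \<pi>) = updown \<pi> @ [b]" if "\<pi> \<in> ?A" for b \<pi>
    using that Suc.hyps by (auto simp: extend_perm_perms avoids_231_312_extend_perm updown_extend_perm)
  have "inj_on updown ?B"
  proof (rule inj_onI)
    fix \<sigma>1 \<sigma>2 assume \<sigma>: "\<sigma>1 \<in> ?B" "\<sigma>2 \<in> ?B" "updown \<sigma>1 = updown \<sigma>2"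
    obtain b1 \<pi>1 where 1: "\<pi>1 \<in> ?A" "\<sigma>1 = extend_perm b1 \<pi>1"
      using avoids_231_312_perms_Suc_cases[of \<sigma>1 n] \<sigma>(1) Suc.hyps
      by (metis (mono_tags) mem_Collect_eq)
    obtain b2 \<pi>2 where 2: "\<pi>2 \<in> ?A" "\<sigma>2 = extend_perm b2 \<pi>2"
      using avoids_231_312_perms_Suc_cases[of \<sigma>2 n] \<sigma>(2) Suc.hyps
      by (metis (mono_tags) mem_Collect_eq)
    have "updown \<pi>1 = updown \<pi>2" "b1 = b2"
      using \<sigma>(3) 1 2 updown_extension by auto
    then show "\<sigma>1 = \<sigma>2" using inj_A 1 2 by (auto dest: inj_onD)
  qed
  moreover have "updown ` ?B = {w. length w = Suc n - 1}"
  proof (intro equalityI subsetI)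
    fix w :: "bool list" assume "w \<in> {w. length w = Suc n - 1}"
    then have "length w = Suc n - 1" by simp
    then have "w \<noteq> []" using Suc.hyps by auto
    then have w: "w = butlast w @ [last w]" "butlast w \<in> updown ` ?A"
      using image_A \<open>length w = Suc n - 1\<close> by auto
    then obtain \<pi> where "\<pi> \<in> ?A" "updown \<pi> = butlast w" by auto
    then have "extend_perm (last w) \<pi> \<in> ?B" "w = updown (extend_perm (last w) \<pi>)"
      using w(1) extension_mem updown_extension by simp_all
    then show "w \<in> updown ` ?B" by (rule rev_image_eqI)
  qed (auto simp: perms_length)
  ultimately show ?case by (simp add: bij_betw_def)
qed

section \<open>Maximal non-adjacent subsets\<close>

definition max_nonadj :: "nat set \<Rightarrow> nat" where
  "max_nonadj S = Max (card ` {I. I \<subseteq> S \<and> nonadj I})"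

lemma nonadj_empty: "nonadj {}"
  by (simp add: nonadj_def)

lemma nonadj_subset: "nonadj J \<Longrightarrow> I \<subseteq> J \<Longrightarrow> nonadj I"
  unfolding nonadj_def by blast

lemma nonadj_image_Suc: "nonadj (Suc ` I) \<longleftrightarrow> nonadj I"
  unfolding nonadj_def by auto

lemma finite_card_nonadj_subsets: "finite S \<Longrightarrow> finite (card ` {I. I \<subseteq> S \<and> nonadj I})"
  by (rule finite_imageI, rule finite_subset[of _ "Pow S"]) auto

lemma card_le_max_nonadj:
  assumes "finite S" "I \<subseteq> S" "nonadj I" shows "card I \<le> max_nonadj S"
proof -
  have "card I \<in> card ` {I. I \<subseteq> S \<and> nonadj I}" using assms(2,3) by blast
  then show ?thesis
    unfolding max_nonadj_def using finite_card_nonadj_subsets[OF assms(1)] by (rule Max_ge[rotated])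
qed

lemma max_nonadj_attained:
  assumes "finite S"
  obtains I where "I \<subseteq> S" "nonadj I" "card I = max_nonadj S"
proof -
  have "{} \<in> {I. I \<subseteq> S \<and> nonadj I}" by (simp add: nonadj_empty)
  then have "card ` {I. I \<subseteq> S \<and> nonadj I} \<noteq> {}" by auto
  then have "max_nonadj S \<in> card ` {I. I \<subseteq> S \<and> nonadj I}"
    unfolding max_nonadj_def using finite_card_nonadj_subsets[OF assms] by (rule Max_in[rotated])
  then obtain I where "I \<subseteq> S" "nonadj I" "max_nonadj S = card I" by auto
  then show thesis using that by simp
qed

lemma max_nonadj_mono:
  assumes "S \<subseteq> T" "finite T" shows "max_nonadj S \<le> max_nonadj T"
proof -
  obtain I where "I \<subseteq> S" "nonadj I" "card I = max_nonadj S"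
    using finite_subset[OF assms] by (rule max_nonadj_attained)
  then show ?thesis using assms card_le_max_nonadj[of T I] by simp
qed

lemma max_nonadj_empty [simp]: "max_nonadj {} = 0"
proof -
  obtain I where "I \<subseteq> {}" "nonadj I" "card I = max_nonadj {}"
    using finite.emptyI by (rule max_nonadj_attained)
  then show ?thesis by simp
qed

lemma max_nonadj_image_Suc:
  assumes "finite S" shows "max_nonadj (Suc ` S) = max_nonadj S"
proof (rule antisym)
  obtain J where J: "J \<subseteq> Suc ` S" "nonadj J" "card J = max_nonadj (Suc ` S)"
    using finite_imageI[OF assms] by (rule max_nonadj_attained)
  obtain I where I: "I \<subseteq> S" "J = Suc ` I" using J(1) by (rule subset_imageE)
  have "card I \<le> max_nonadj S"
    using I J(2) nonadj_image_Suc by (intro card_le_max_nonadj[OF assms]) simp_all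
  then show "max_nonadj (Suc ` S) \<le> max_nonadj S" using I J(3) by (simp add: card_image)
next
  obtain I where I: "I \<subseteq> S" "nonadj I" "card I = max_nonadj S"
    using assms by (rule max_nonadj_attained)
  have "card (Suc ` I) \<le> max_nonadj (Suc ` S)"
    using I finite_imageI[OF assms] nonadj_image_Suc by (intro card_le_max_nonadj) auto
  then show "max_nonadj S \<le> max_nonadj (Suc ` S)" using I(3) by (simp add: card_image)
qed

lemma nonadj_insert_0_Suc_Suc: "nonadj (insert 0 (Suc ` Suc ` I)) \<longleftrightarrow> nonadj I"
proof -
  have "nonadj (insert 0 (Suc ` Suc ` I)) \<longleftrightarrow> nonadj (Suc ` Suc ` I)"
    unfolding nonadj_def by auto
  then show ?thesis by (simp add: nonadj_image_Suc)
qed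

lemma Suc_max_nonadj_le:
  assumes "finite S" shows "Suc (max_nonadj S) \<le> max_nonadj (insert 0 (Suc ` Suc ` S))"
proof -
  obtain I where I: "I \<subseteq> S" "nonadj I" "card I = max_nonadj S"
    using assms by (rule max_nonadj_attained)
  have "card (insert 0 (Suc ` Suc ` I)) \<le> max_nonadj (insert 0 (Suc ` Suc ` S))"
    using I assms by (intro card_le_max_nonadj) (auto simp: nonadj_insert_0_Suc_Suc)
  then show ?thesis using I finite_subset[OF I(1) assms] by (simp add: card_image)
qed

lemma max_nonadj_le_Suc:
  assumes "finite S" shows "max_nonadj (insert 0 (insert 1 (Suc ` Suc ` S))) \<le> Suc (max_nonadj S)"
proof -
  let ?T = "insert 0 (insert 1 (Suc ` Suc ` S))"
  have "finite ?T" using assms by simp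
  then obtain J where J: "J \<subseteq> ?T" "nonadj J" "card J = max_nonadj ?T"
    by (rule max_nonadj_attained)
  define I where "I = {i. Suc (Suc i) \<in> J}"
  have "Suc ` Suc ` I \<subseteq> J" by (auto simp: I_def)
  then have "nonadj I" using nonadj_subset[OF J(2)] nonadj_image_Suc by metis
  moreover have "I \<subseteq> S" using J(1) by (auto simp: I_def)
  ultimately have card_I: "card I \<le> max_nonadj S" using assms by (intro card_le_max_nonadj)
  have "\<not> (0 \<in> J \<and> 1 \<in> J)" using J(2)[unfolded nonadj_def, rule_format, of 0 1] by auto
  then have card_01: "card (J \<inter> {0, 1}) \<le> 1" by (auto simp: card_le_Suc0_iff_eq)
  have "J \<subseteq> (J \<inter> {0, 1}) \<union> Suc ` Suc ` I"
  proof
    fix j assume "j \<in> J"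
    then show "j \<in> (J \<inter> {0, 1}) \<union> Suc ` Suc ` I"
      using J(1) by (cases j; cases "j - 1") (auto simp: I_def)
  qed
  then have "card J \<le> card ((J \<inter> {0, 1}) \<union> Suc ` Suc ` I)"
    using finite_subset[OF \<open>I \<subseteq> S\<close> assms] by (intro card_mono) auto
  also have "\<dots> \<le> card (J \<inter> {0, 1}) + card (Suc ` Suc ` I)" by (rule card_Un_le)
  finally show ?thesis using J(3) card_I card_01 by (simp add: card_image)
qed

lemma max_nonadj_insert_0:
  assumes "finite S"
  shows "max_nonadj (insert 0 (Suc ` Suc ` S)) = Suc (max_nonadj S)"
    and "max_nonadj (insert 0 (insert 1 (Suc ` Suc ` S))) = Suc (max_nonadj S)"
proof -
  have "max_nonadj (insert 0 (Suc ` Suc ` S)) \<le> max_nonadj (insert 0 (insert 1 (Suc ` Suc ` S)))"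
    using assms by (intro max_nonadj_mono) auto
  then show "max_nonadj (insert 0 (Suc ` Suc ` S)) = Suc (max_nonadj S)"
    and "max_nonadj (insert 0 (insert 1 (Suc ` Suc ` S))) = Suc (max_nonadj S)"
    using Suc_max_nonadj_le[OF assms] max_nonadj_le_Suc[OF assms] by linarith+
qed

section \<open>Weights of up-down words\<close>

definition true_positions :: "bool list \<Rightarrow> nat set" where
  "true_positions w = {i. i < length w \<and> w ! i}"

lemma finite_true_positions [simp]: "finite (true_positions w)"
  by (simp add: true_positions_def)

lemma true_positions_Nil [simp]: "true_positions [] = {}"
  by (simp add: true_positions_def)

lemma true_positions_Cons:
  "true_positions (b # w) = (if b then insert 0 (Suc ` true_positions w) else Suc ` true_positions w)"
proof (rule set_eqI)
  fix i show "i \<in> true_positions (b # w) \<longleftrightarrow>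
      i \<in> (if b then insert 0 (Suc ` true_positions w) else Suc ` true_positions w)"
    by (cases i) (auto simp: true_positions_def image_iff)
qed

lemma ascset_eq_true_positions: "ascset \<pi> = true_positions (updown \<pi>)"
  by (auto simp: ascset_def true_positions_def updown_def)

lemma desset_eq_true_positions:
  assumes "distinct \<pi>" shows "desset \<pi> = true_positions (map Not (updown \<pi>))"
proof -
  have "\<pi> ! Suc i < \<pi> ! i \<longleftrightarrow> \<not> \<pi> ! i < \<pi> ! Suc i" if "Suc i < length \<pi>" for i
    using assms that nth_eq_iff_index_eq[OF assms, of i "Suc i"] by auto
  then show ?thesis by (auto simp: desset_def true_positions_def updown_def)
qed

definition set_weight :: "'a::comm_semiring_1 \<Rightarrow> 'a \<Rightarrow> nat set \<Rightarrow> 'a" where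
  "set_weight c v S = c ^ card S * v ^ max_nonadj S"

lemma set_weight_empty [simp]: "set_weight c v {} = 1"
  by (simp add: set_weight_def)

lemma set_weight_image_Suc: "finite S \<Longrightarrow> set_weight c v (Suc ` S) = set_weight c v S"
  by (simp add: set_weight_def card_image max_nonadj_image_Suc)

lemma set_weight_insert_0:
  "finite S \<Longrightarrow> set_weight c v (insert 0 (Suc ` Suc ` S)) = c * v * set_weight c v S"
  by (simp add: set_weight_def card_image max_nonadj_insert_0 image_iff mult_ac)

lemma set_weight_insert_0_1:
  "finite S \<Longrightarrow> set_weight c v (insert 0 (insert 1 (Suc ` Suc ` S))) = c\<^sup>2 * v * set_weight c v S"
  using max_nonadj_insert_0(2)[of S]
  by (simp add: set_weight_def card_image image_iff mult_ac power2_eq_square)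

definition word_weight :: "'a::comm_semiring_1 \<Rightarrow> 'a \<Rightarrow> 'a \<Rightarrow> 'a \<Rightarrow> bool list \<Rightarrow> 'a" where
  "word_weight p q y z w =
     set_weight p y (true_positions w) * set_weight q z (true_positions (map Not w))"

lemma word_weight_Nil [simp]: "word_weight p q y z [] = 1"
  by (simp add: word_weight_def)

lemma word_weight_map_Not: "word_weight p q y z (map Not w) = word_weight q p z y w"
  by (simp add: word_weight_def comp_def mult.commute)

lemma word_weight_True_Nil: "word_weight p q y z [True] = p * y"
  using set_weight_insert_0[of "{}" p y] by (simp add: word_weight_def true_positions_Cons)

lemma word_weight_True_True:
  "word_weight p q y z (True # True # u) = p\<^sup>2 * y * word_weight p q y z u"
  using set_weight_insert_0_1[of "true_positions u" p y]
  by (simp add: word_weight_def true_positions_Cons set_weight_image_Suc mult_ac)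

lemma word_weight_True_False:
  "word_weight p q y z (True # False # u) = p * y * word_weight p q y z (False # u)"
proof -
  have "true_positions (True # False # u) = insert 0 (Suc ` Suc ` true_positions u)"
    and "true_positions (False # u) = Suc ` true_positions u"
    and "true_positions (map Not (True # False # u)) = Suc ` true_positions (map Not (False # u))"
    by (simp_all add: true_positions_Cons)
  then show ?thesis
    unfolding word_weight_def by (simp add: set_weight_insert_0 set_weight_image_Suc mult_ac)
qed

lemma word_weight_False_Nil: "word_weight p q y z [False] = q * z"
  using word_weight_map_Not[of p q y z "[True]"] by (simp add: word_weight_True_Nil)

lemma word_weight_False_False:
  "word_weight p q y z (False # False # u) = q\<^sup>2 * z * word_weight p q y z u"
  using word_weight_map_Not[of p q y z "True # True # map Not u"]
    word_weight_map_Not[of q p z y u]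
  by (simp add: word_weight_True_True comp_def)

lemma word_weight_False_True:
  "word_weight p q y z (False # True # u) = q * z * word_weight p q y z (True # u)"
  using word_weight_map_Not[of p q y z "True # False # map Not u"]
    word_weight_map_Not[of p q y z "False # map Not u"]
  by (simp add: word_weight_True_False comp_def)

lemma finite_bool_lists_length: "finite {w :: bool list. length w = m}"
  using finite_lists_length_eq[OF finite_UNIV, of m] by simp

lemma sum_bool_lists_length_Suc:
  "(\<Sum>w | length w = Suc m. f w) =
     (\<Sum>u | length u = m. f (True # u)) + (\<Sum>u | length u = m. f (False # u))"
proof -
  have "{w. length w = Suc m} = Cons True ` {u. length u = m} \<union> Cons False ` {u. length u = m}"
    by (auto simp: length_Suc_conv)
  also have "sum f \<dots> =
      sum f (Cons True ` {u. length u = m}) + sum f (Cons False ` {u. length u = m})"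
    by (rule sum.union_disjoint) (auto simp: finite_bool_lists_length)
  finally show ?thesis by (simp add: sum.reindex)
qed

context
  fixes p q y z :: "'a::comm_semiring_1"
begin

definition weight_sum :: "nat \<Rightarrow> 'a" where
  "weight_sum m = (\<Sum>w | length w = m. word_weight p q y z w)"

definition prefixed_weight_sum :: "bool \<Rightarrow> nat \<Rightarrow> 'a" where
  "prefixed_weight_sum b m = (\<Sum>u | length u = m. word_weight p q y z (b # u))"

lemma weight_sum_0: "weight_sum 0 = 1"
  by (simp add: weight_sum_def)

lemma weight_sum_Suc:
  "weight_sum (Suc m) = prefixed_weight_sum True m + prefixed_weight_sum False m"
  by (simp add: weight_sum_def prefixed_weight_sum_def sum_bool_lists_length_Suc)

lemma prefixed_weight_sum_0:
  "prefixed_weight_sum True 0 = p * y" "prefixed_weight_sum False 0 = q * z"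
  by (simp_all add: prefixed_weight_sum_def word_weight_True_Nil word_weight_False_Nil)

lemma prefixed_weight_sum_True_Suc:
  "prefixed_weight_sum True (Suc m) = p\<^sup>2 * y * weight_sum m + p * y * prefixed_weight_sum False m"
  by (simp add: prefixed_weight_sum_def weight_sum_def sum_bool_lists_length_Suc
      word_weight_True_True word_weight_True_False sum_distrib_left)

lemma prefixed_weight_sum_False_Suc:
  "prefixed_weight_sum False (Suc m) = q\<^sup>2 * z * weight_sum m + q * z * prefixed_weight_sum True m"
  by (simp add: prefixed_weight_sum_def weight_sum_def sum_bool_lists_length_Suc
      word_weight_False_False word_weight_False_True sum_distrib_left add.commute)

lemma weight_sum_recurrence:
  "weight_sum (m + 3) =
     (p\<^sup>2 * y + q\<^sup>2 * z + p * q * y * z) * weight_sum (m + 1)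
     + (p\<^sup>2 * q + p * q\<^sup>2) * y * z * weight_sum m"
  by (simp add: numeral_3_eq_3 weight_sum_Suc prefixed_weight_sum_True_Suc
      prefixed_weight_sum_False_Suc algebra_simps power2_eq_square)

lemma weight_sum_1: "weight_sum 1 = p * y + q * z"
  using weight_sum_Suc[of 0] by (simp add: prefixed_weight_sum_0)

lemma weight_sum_2: "weight_sum 2 = p\<^sup>2 * y + q\<^sup>2 * z + 2 * p * q * y * z"
  by (simp add: numeral_2_eq_2 weight_sum_Suc prefixed_weight_sum_True_Suc
      prefixed_weight_sum_False_Suc prefixed_weight_sum_0 weight_sum_0 algebra_simps mult_2_right)

end

section \<open>The generating function\<close>

lemma perm_weight_eq_word_weight:
  assumes "\<pi> \<in> perms n"
  shows "p ^ asc \<pi> * q ^ des \<pi> * y ^ MNA \<pi> * z ^ MND \<pi> = word_weight p q y z (updown \<pi>)"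
proof -
  have "distinct \<pi>" using assms by (simp add: perms_def)
  then show ?thesis
    by (simp add: asc_def des_def MNA_def MND_def word_weight_def set_weight_def
        max_nonadj_def[symmetric] ascset_eq_true_positions desset_eq_true_positions mult_ac)
qed

lemma fps_nth_G231_312_0: "fps_nth (G231_312 p q y z) 0 = 1"
proof -
  have "av2 0 [2,3,1] [3,1,2] = {[]}"
    unfolding av2_231_312_eq by (auto simp: perms_def avoids_231_312_def)
  then show ?thesis
    by (simp add: G231_312_def asc_def des_def MNA_def MND_def ascset_def desset_def nonadj_def)
qed

lemma fps_nth_G231_312_Suc: "fps_nth (G231_312 p q y z) (Suc m) = weight_sum p q y z m"
proof -
  have "fps_nth (G231_312 p q y z) (Suc m) =
      (\<Sum>\<pi> \<in> {\<pi> \<in> perms (Suc m). avoids_231_312 \<pi>}. word_weight p q y z (updown \<pi>))"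
    unfolding G231_312_def av2_231_312_eq fps_nth_Abs_fps
    by (rule sum.cong) (auto simp: perm_weight_eq_word_weight)
  also have "\<dots> = (\<Sum>w | length w = m. word_weight p q y z w)"
    using bij_betw_updown[of "Suc m"] by (simp add: sum.reindex_bij_betw)
  finally show ?thesis by (simp add: weight_sum_def)
qed

lemma fps_nth_mult_cubic:
  fixes G :: "'a::comm_ring_1 fps"
  shows "fps_nth (G * (1 - fps_const a * fps_X ^ 2 - fps_const b * fps_X ^ 3)) n =
    fps_nth G n - (if n < 2 then 0 else a * fps_nth G (n - 2))
      - (if n < 3 then 0 else b * fps_nth G (n - 3))"
proof -
  have "G * (1 - fps_const a * fps_X ^ 2 - fps_const b * fps_X ^ 3) =
      G - fps_const a * (fps_X ^ 2 * G) - fps_const b * (fps_X ^ 3 * G)"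
    by (simp add: algebra_simps)
  then show ?thesis by (simp add: fps_X_power_mult_nth)
qed

lemma G231_312_mult_denominator:
  fixes p q y z :: "'a::comm_ring_1"
  shows "G231_312 p q y z *
      (1 - fps_const (p\<^sup>2 * y + q\<^sup>2 * z + p * q * y * z) * fps_X ^ 2
         - fps_const ((p\<^sup>2 * q + p * q\<^sup>2) * y * z) * fps_X ^ 3) =
    1 + fps_X + fps_const (p * y - p\<^sup>2 * y + q * z - q\<^sup>2 * z - p * q * y * z) * fps_X ^ 2
      + fps_const (p * q * y * z - p\<^sup>2 * q * y * z - p * q\<^sup>2 * y * z) * fps_X ^ 3"
    (is "?G * ?D = ?N")
proof (rule fps_ext)
  fix n :: nat
  have G: "fps_nth ?G 0 = 1" "fps_nth ?G (Suc m) = weight_sum p q y z m" for m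
    by (simp_all add: fps_nth_G231_312_0 fps_nth_G231_312_Suc)
  show "fps_nth (?G * ?D) n = fps_nth ?N n"
  proof (cases "n < 4")
    case True
    then have "n \<in> {0, 1, 2, 3}" by auto
    then show ?thesis
      unfolding fps_nth_mult_cubic using weight_sum_0 weight_sum_1 weight_sum_2
      by (auto simp: G eval_nat_numeral algebra_simps)
  next
    case False
    then obtain m where "n = m + 4" using le_Suc_ex[of 4 n] by (auto simp: add.commute)
    then show ?thesis
      unfolding fps_nth_mult_cubic using weight_sum_recurrence[of p q y z m]
      by (simp add: G eval_nat_numeral)
  qed
qed

lemma fps_eq_divide_if_mult_eq:
  fixes G N D :: "'a::field fps"
  assumes "fps_nth D 0 \<noteq> 0" "G * D = N"
  shows "G = N / D"
proof -
  have "D \<noteq> 0" using assms(1) by auto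
  then show ?thesis using assms(2) by auto
qed

theorem theorem6:
  fixes p q y z :: "'a::field"
  defines "X \<equiv> (fps_X :: 'a fps)"
      and "P \<equiv> fps_const p" and "Q \<equiv> fps_const q"
      and "Y \<equiv> fps_const y" and "Z \<equiv> fps_const z"
  shows "G231_312 p q y z =
    (1 + X + P * X^2 * Y - P^2 * X^2 * Y + Q * X^2 * Z - Q^2 * X^2 * Z
       - P * Q * X^2 * Y * Z + P * Q * X^3 * Y * Z - P^2 * Q * X^3 * Y * Z
       - P * Q^2 * X^3 * Y * Z)
    / (1 - P^2 * X^2 * Y - Q^2 * X^2 * Z - P * Q * X^2 * Y * Z
         - P^2 * Q * X^3 * Y * Z - P * Q^2 * X^3 * Y * Z)"
    (is "?G = ?N / ?D")
proof -
  have D: "?D = 1 - fps_const (p\<^sup>2 * y + q\<^sup>2 * z + p * q * y * z) * fps_X ^ 2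
                  - fps_const ((p\<^sup>2 * q + p * q\<^sup>2) * y * z) * fps_X ^ 3"
    by (rule fps_ext) (simp add: X_def P_def Q_def Y_def Z_def algebra_simps)
  have N: "?N = 1 + fps_X
                  + fps_const (p * y - p\<^sup>2 * y + q * z - q\<^sup>2 * z - p * q * y * z) * fps_X ^ 2
                  + fps_const (p * q * y * z - p\<^sup>2 * q * y * z - p * q\<^sup>2 * y * z) * fps_X ^ 3"
    by (rule fps_ext) (simp add: X_def P_def Q_def Y_def Z_def algebra_simps)
  show ?thesis
    unfolding N D by (rule fps_eq_divide_if_mult_eq) (simp_all add: G231_312_mult_denominator)
qed

end
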